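(* Let $V$ be an $n$-dimensional real affine space provided with a $C^2$ Finsler metric $F$. Then $(V,F)$ is a Minkowski-Randers space if and only if for some integer $k$ with $2\le k\le n-1$ the set of $k$-dimensional affine subspaces of $V$ which, with the metric induced by $F$, are Minkowski-Randers spaces is dense in the affine Grassmannian ${\rm Graff}_k(V)$ of $k$-dimensional affine subspaces of $V$.
   Context: A Minkowski norm is a nonnegative function on a vector space, $C^2$ outside the origin, vanishing only at $\mathbf{0}$, positively homogeneous of degree one, satisfying the triangle inequality, with positive definite Hessian of its square outside the origin. A $C^2$ Finsler metric on $V$ is a continuous $F:TV\to[0,\infty)$, $C^2$ outside the zero section, restricting to a Minkowski norm on each tangent space. A Minkowski-Randers space is an affine space with a $C^2$ Finsler metric that is the sum of a translation-invariant Finsler metric and a $1$-form. The induced metric on an affine subspace is the restriction of $F$ to its tangent bundle. *)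

theory Defs
  imports "HOL-Analysis.Analysis"
begin

definition C2_with :: "'b::real_normed_vector set \<Rightarrow> ('b \<Rightarrow> real)
    \<Rightarrow> ('b \<Rightarrow> ('b \<Rightarrow>\<^sub>L real)) \<Rightarrow> ('b \<Rightarrow> ('b \<Rightarrow>\<^sub>L ('b \<Rightarrow>\<^sub>L real))) \<Rightarrow> bool" where
  "C2_with S f f' f'' \<longleftrightarrow>
     (\<forall>x\<in>S. (f has_derivative blinfun_apply (f' x)) (at x within S)) \<and>
     (\<forall>x\<in>S. (f' has_derivative blinfun_apply (f'' x)) (at x within S)) \<and>
     continuous_on S f''"

definition C2_on :: "'b::real_normed_vector set \<Rightarrow> ('b \<Rightarrow> real) \<Rightarrow> bool" where
  "C2_on S f \<longleftrightarrow> (\<exists>f' f''. C2_with S f f' f'')"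

definition minkowski_norm :: "'a::euclidean_space set \<Rightarrow> ('a \<Rightarrow> real) \<Rightarrow> bool" where
  "minkowski_norm L N \<longleftrightarrow>
     (\<forall>v\<in>L. N v \<ge> 0) \<and>
     (\<forall>v\<in>L. N v = 0 \<longleftrightarrow> v = 0) \<and>
     (\<forall>v\<in>L. \<forall>t>0. N (t *\<^sub>R v) = t * N v) \<and>
     (\<forall>u\<in>L. \<forall>v\<in>L. N (u + v) \<le> N u + N v) \<and>
     C2_on (L - {0}) N \<and>
     (\<exists>g' g''. C2_with (L - {0}) (\<lambda>v. (N v)\<^sup>2) g' g'' \<and>
        (\<forall>v\<in>L - {0}. \<forall>w\<in>L - {0}. blinfun_apply (blinfun_apply (g'' v) w) w > 0))"

definition direction :: "'a::real_vector set \<Rightarrow> 'a set" where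
  "direction A = {x - y | x y. x \<in> A \<and> y \<in> A}"

text \<open>C^2 Finsler metric on the affine subspace A: F x v is the length of the
 tangent vector v \<in> direction A at the point x \<in> A.\<close>
definition finsler_on :: "'a::euclidean_space set \<Rightarrow> ('a \<Rightarrow> 'a \<Rightarrow> real) \<Rightarrow> bool" where
  "finsler_on A F \<longleftrightarrow>
     continuous_on (A \<times> direction A) (\<lambda>(x, v). F x v) \<and>
     C2_on (A \<times> (direction A - {0})) (\<lambda>(x, v). F x v) \<and>
     (\<forall>x\<in>A. minkowski_norm (direction A) (F x))"

definition minkowski_randers :: "'a::euclidean_space set \<Rightarrow> ('a \<Rightarrow> 'a \<Rightarrow> real) \<Rightarrow> bool" where
  "minkowski_randers A F \<longleftrightarrow>
     finsler_on A F \<and>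
     (\<exists>N \<beta>. finsler_on A (\<lambda>_ v. N v) \<and>
        (\<forall>x\<in>A. \<forall>u\<in>direction A. \<forall>v\<in>direction A. \<forall>a b.
            \<beta> x (a *\<^sub>R u + b *\<^sub>R v) = a * \<beta> x u + b * \<beta> x v) \<and>
        (\<forall>x\<in>A. \<forall>v\<in>direction A. F x v = N v + \<beta> x v))"

definition graff :: "nat \<Rightarrow> 'a::euclidean_space set set" where
  "graff k = {A. affine A \<and> aff_dim A = int k}"

text \<open>Closeness in the affine Grassmannian: Graff_k embedded via
 A \<mapsto> (orthogonal projection onto direction A, foot point of A nearest to 0).\<close>
definition graff_near :: "'a::euclidean_space set \<Rightarrow> 'a set \<Rightarrow> real \<Rightarrow> bool" where
  "graff_near A B e \<longleftrightarrow>
     (\<forall>x. norm x \<le> 1 \<longrightarrow>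
        norm (closest_point (direction A) x - closest_point (direction B) x) < e) \<and>
     norm (closest_point A 0 - closest_point B 0) < e"

definition graff_dense :: "nat \<Rightarrow> 'a::euclidean_space set set \<Rightarrow> bool" where
  "graff_dense k D \<longleftrightarrow> D \<subseteq> graff k \<and>
     (\<forall>A\<in>graff k. \<forall>e>0. \<exists>B\<in>D. graff_near A B e)"

end

theory Submission
  imports Defs
begin

text \<open>
  Restricting a Minkowski-Randers metric to an affine subspace gives a Minkowski-Randers
  metric, so one direction holds with \<open>k = 2\<close>. Conversely, on a Minkowski-Randers
  subspace \<open>A\<close> the difference \<open>F y - F x\<close> of the metrics at two points of \<open>A\<close> is
  linear on the direction of \<open>A\<close>. This condition is closed in the affine Grassmannian, so
  density gives it on every \<open>k\<close>-plane, hence on every affine 2-plane. Differentiating along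
  a line \<open>x + t d\<close>, the derivative \<open>D d w\<close> of \<open>F (-) w\<close> in direction \<open>d\<close> at a fixed base
  point is additive in \<open>d\<close> and, by the 2-plane condition, linear in \<open>w\<close> on every plane
  \<open>span {d, u}\<close>; a symmetry argument then makes \<open>D d\<close> linear. Integrating along segments,
  \<open>F y - F x\<close> is linear for all \<open>x, y\<close>, and \<open>F = F 0 + (F - F 0)\<close> is the required splitting.
\<close>

section \<open>Restriction to affine subspaces\<close>

lemma C2_with_mono: "C2_with S f f' f'' \<Longrightarrow> T \<subseteq> S \<Longrightarrow> C2_with T f f' f''"
  unfolding C2_with_def by (meson continuous_on_subset has_derivative_subset subsetD)

lemma C2_on_mono: "C2_on S f \<Longrightarrow> T \<subseteq> S \<Longrightarrow> C2_on T f"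
  unfolding C2_on_def using C2_with_mono by blast

lemma direction_UNIV [simp]: "direction UNIV = UNIV"
  unfolding direction_def by (auto, metis diff_zero)

lemma direction_mono: "A \<subseteq> B \<Longrightarrow> direction A \<subseteq> direction B"
  unfolding direction_def by blast

lemma affine_add_direction:
  assumes "affine A" "b \<in> A" "z \<in> direction A"
  shows "b + z \<in> A"
proof -
  obtain p q where pq: "z = p - q" "p \<in> A" "q \<in> A"
    using assms(3) unfolding direction_def by blast
  have "b + 1 *\<^sub>R (p - q) \<in> A"
    by (rule mem_affine_3_minus) (use assms pq in auto)
  then show ?thesis using pq by simp
qed

lemma subspace_direction:
  fixes A :: "'a::euclidean_space set"
  assumes "affine A" "A \<noteq> {}"
  shows "subspace (direction A)"
proof -
  obtain a where a: "a \<in> A" using assms(2) by blast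
  have "direction A = (\<lambda>x. x - a) ` A"
  proof
    show "direction A \<subseteq> (\<lambda>x. x - a) ` A"
      using affine_add_direction[OF assms(1) a] by force
  qed (use a in \<open>auto simp: direction_def\<close>)
  then show ?thesis
    using affine_diffs_subspace_subtract[OF assms(1) a] by simp
qed

lemma direction_translation_subspace:
  assumes "subspace T"
  shows "direction ((+) x ` T) = T"
proof
  show "direction ((+) x ` T) \<subseteq> T"
    unfolding direction_def using assms by (auto simp: subspace_diff)
  show "T \<subseteq> direction ((+) x ` T)"
  proof
    fix z assume "z \<in> T"
    then have "z = (x + z) - (x + 0)" "x + z \<in> (+) x ` T" "x + 0 \<in> (+) x ` T"
      using subspace_0[OF assms] by auto
    then show "z \<in> direction ((+) x ` T)" unfolding direction_def by blast
  qed
qed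

lemma minkowski_norm_mono:
  assumes "minkowski_norm L N" "M \<subseteq> L"
  shows "minkowski_norm M N"
proof -
  have sub: "M - {0} \<subseteq> L - {0}" using assms(2) by blast
  obtain g' g'' where "C2_with (L - {0}) (\<lambda>v. (N v)\<^sup>2) g' g''"
    and "\<forall>v\<in>L - {0}. \<forall>w\<in>L - {0}. blinfun_apply (blinfun_apply (g'' v) w) w > 0"
    using assms(1) unfolding minkowski_norm_def by blast
  then have "C2_with (M - {0}) (\<lambda>v. (N v)\<^sup>2) g' g'' \<and>
      (\<forall>v\<in>M - {0}. \<forall>w\<in>M - {0}. blinfun_apply (blinfun_apply (g'' v) w) w > 0)"
    using C2_with_mono sub by blast
  moreover have "C2_on (M - {0}) N"
    using assms(1) C2_on_mono sub unfolding minkowski_norm_def by blast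
  ultimately show ?thesis
    using assms unfolding minkowski_norm_def by blast
qed

lemma finsler_on_mono:
  assumes "finsler_on B F" "A \<subseteq> B"
  shows "finsler_on A F"
proof -
  have sub: "A \<times> direction A \<subseteq> B \<times> direction B" "A \<times> (direction A - {0}) \<subseteq> B \<times> (direction B - {0})"
    using direction_mono[OF assms(2)] assms(2) by auto
  then show ?thesis
    using assms continuous_on_subset C2_on_mono minkowski_norm_mono direction_mono[OF assms(2)]
    unfolding finsler_on_def by (metis subsetD)
qed

lemma minkowski_randers_mono:
  assumes "minkowski_randers B F" "A \<subseteq> B"
  shows "minkowski_randers A F"
proof -
  have dir: "direction A \<subseteq> direction B" using assms(2) by (rule direction_mono)
  obtain N \<beta> where F: "finsler_on B F" and N: "finsler_on B (\<lambda>_ v. N v)"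
    and lin: "\<forall>x\<in>B. \<forall>u\<in>direction B. \<forall>v\<in>direction B. \<forall>a b.
            \<beta> x (a *\<^sub>R u + b *\<^sub>R v) = a * \<beta> x u + b * \<beta> x v"
    and split: "\<forall>x\<in>B. \<forall>v\<in>direction B. F x v = N v + \<beta> x v"
    using assms(1) unfolding minkowski_randers_def by blast
  show ?thesis
    unfolding minkowski_randers_def
  proof (intro conjI exI[of _ N] exI[of _ \<beta>])
    show "finsler_on A F" "finsler_on A (\<lambda>_ v. N v)"
      using finsler_on_mono[OF F assms(2)] finsler_on_mono[OF N assms(2)] .
  qed (use lin split dir assms(2) in blast)+
qed

section \<open>Linear differences\<close>

definition linear_differences_on :: "'a::euclidean_space set \<Rightarrow> ('a \<Rightarrow> 'a \<Rightarrow> real) \<Rightarrow> bool" where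
  "linear_differences_on A F \<longleftrightarrow>
     (\<forall>x\<in>A. \<forall>y\<in>A. \<forall>u\<in>direction A. \<forall>v\<in>direction A. \<forall>a b.
        F y (a *\<^sub>R u + b *\<^sub>R v) - F x (a *\<^sub>R u + b *\<^sub>R v) = a * (F y u - F x u) + b * (F y v - F x v))"

lemma linear_differences_on_mono:
  "linear_differences_on B F \<Longrightarrow> A \<subseteq> B \<Longrightarrow> linear_differences_on A F"
  unfolding linear_differences_on_def using direction_mono by (meson subsetD)

lemma minkowski_randers_imp_linear_differences_on:
  assumes "affine A" "A \<noteq> {}" "minkowski_randers A F"
  shows "linear_differences_on A F"
  unfolding linear_differences_on_def
proof (intro ballI allI)
  obtain N \<beta> where
    lin: "\<forall>x\<in>A. \<forall>u\<in>direction A. \<forall>v\<in>direction A. \<forall>a b.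
            \<beta> x (a *\<^sub>R u + b *\<^sub>R v) = a * \<beta> x u + b * \<beta> x v"
    and split: "\<forall>x\<in>A. \<forall>v\<in>direction A. F x v = N v + \<beta> x v"
    using assms(3) unfolding minkowski_randers_def by blast
  fix x y u v a b
  assume xy: "x \<in> A" "y \<in> A" and uv: "u \<in> direction A" "v \<in> direction A"
  have "a *\<^sub>R u + b *\<^sub>R v \<in> direction A"
    using subspace_direction[OF assms(1,2)] uv by (simp add: subspace_add subspace_scale)
  with xy uv split lin
  show "F y (a *\<^sub>R u + b *\<^sub>R v) - F x (a *\<^sub>R u + b *\<^sub>R v) = a * (F y u - F x u) + b * (F y v - F x v)"
    by (simp add: algebra_simps)
qed

lemma subspace_of_dim_containing:
  fixes S :: "'a::euclidean_space set"
  assumes "dim S \<le> k" "k \<le> DIM('a)"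
  obtains T where "subspace T" "S \<subseteq> T" "dim T = k"
proof -
  obtain I where I: "I \<subseteq> S" "independent I" "S \<subseteq> span I" "card I = dim S"
    by (rule basis_exists)
  obtain B where B: "I \<subseteq> B" "independent B" "UNIV \<subseteq> span B"
    by (rule maximal_independent_subset_extend[of I UNIV]) (use I(2) in auto)
  have "card B = DIM('a)"
    using dim_span_eq_card_independent[OF B(2)] B(3) by (metis dim_UNIV top.extremum_unique)
  then obtain C where C: "I \<subseteq> C" "C \<subseteq> B" "card C = k"
    using exists_subset_between[of I k B] I(4) B(1) finiteI_independent[OF B(2)] assms by auto
  show ?thesis
  proof (rule that)
    show "subspace (span C)" by simp
    show "S \<subseteq> span C" using I(3) span_mono[OF C(1)] by blast
    show "dim (span C) = k"
      using dim_span_eq_card_independent[OF independent_mono[OF B(2) C(2)]] C(3) by simp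
  qed
qed

lemma linear_differences_on_planes:
  fixes F :: "'a::euclidean_space \<Rightarrow> 'a \<Rightarrow> real"
  assumes "2 \<le> k" "k \<le> DIM('a)" "\<forall>A\<in>graff k. linear_differences_on A F"
  shows "linear_differences_on ((+) x ` span {d, u}) F"
proof -
  have "card {d, u} \<le> 2" by (simp add: card_insert_if)
  then have "dim (span {d, u}) \<le> k"
    using dim_le_card'[of "{d, u}"] assms(1) by simp
  then obtain T where T: "subspace T" "span {d, u} \<subseteq> T" "dim T = k"
    using subspace_of_dim_containing assms(2) by blast
  have "(+) x ` T \<in> graff k"
    unfolding graff_def using T affine_translation[of T x] subspace_imp_affine[of T]
    by (simp add: aff_dim_translation_eq aff_dim_subspace)
  then show ?thesis
    using assms(3) linear_differences_on_mono T(2) by blast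
qed

section \<open>Approximation in the affine Grassmannian\<close>

lemma graff_affine_nonempty:
  assumes "A \<in> graff k"
  shows "affine A" "A \<noteq> {}"
  using assms unfolding graff_def by auto

lemma graff_near_approx_direction:
  fixes A B :: "'a::euclidean_space set"
  assumes near: "graff_near A B e" and A: "affine A" "A \<noteq> {}" and B: "affine B" "B \<noteq> {}"
    and z: "z \<in> direction A"
  obtains z' where "z' \<in> direction B" "norm (z' - z) \<le> (norm z + 1) * e"
proof -
  define c where "c = norm z + 1"
  have c: "c > 0" unfolding c_def by (simp add: add_nonneg_pos)
  define z1 where "z1 = z /\<^sub>R c"
  have "norm z1 \<le> 1"
    using c unfolding z1_def c_def by (simp add: field_simps)
  have "closest_point (direction A) z1 = z1"
    using subspace_direction[OF A] z unfolding z1_def by (simp add: closest_point_self subspace_scale)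
  moreover have "norm (closest_point (direction A) z1 - closest_point (direction B) z1) < e"
    using near \<open>norm z1 \<le> 1\<close> unfolding graff_near_def by blast
  ultimately have close: "norm (z1 - closest_point (direction B) z1) < e"
    by simp
  have subB: "subspace (direction B)" using B by (rule subspace_direction)
  then have "closest_point (direction B) z1 \<in> direction B"
    using closed_subspace subspace_0 by (metis closest_point_in_set empty_iff)
  then have "c *\<^sub>R closest_point (direction B) z1 \<in> direction B"
    using subB by (simp add: subspace_scale)
  moreover have "norm (c *\<^sub>R closest_point (direction B) z1 - z) \<le> (norm z + 1) * e"
  proof -
    have "c *\<^sub>R closest_point (direction B) z1 - z = c *\<^sub>R (closest_point (direction B) z1 - z1)"
      using c unfolding z1_def by (simp add: algebra_simps)
    then have "norm (c *\<^sub>R closest_point (direction B) z1 - z) = c * norm (z1 - closest_point (direction B) z1)"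
      using c by (simp add: norm_minus_commute)
    also have "\<dots> \<le> c * e" using close c by simp
    finally show ?thesis unfolding c_def .
  qed
  ultimately show ?thesis by (rule that)
qed

lemma graff_near_approx_point:
  fixes A B :: "'a::euclidean_space set"
  assumes near: "graff_near A B e" and A: "affine A" "A \<noteq> {}" and B: "affine B" "B \<noteq> {}"
    and p: "p \<in> A"
  obtains p' where "p' \<in> B" "norm (p' - p) \<le> (norm (p - closest_point A 0) + 2) * e"
proof -
  define a b where "a = closest_point A 0" and "b = closest_point B 0"
  have "a \<in> A" "b \<in> B"
    unfolding a_def b_def using A B affine_closed closest_point_in_set by blast+
  have ab: "norm (b - a) < e"
    using near unfolding graff_near_def a_def b_def by (simp add: norm_minus_commute)
  have "p - a \<in> direction A" unfolding direction_def using p \<open>a \<in> A\<close> by blast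
  then obtain z where z: "z \<in> direction B" "norm (z - (p - a)) \<le> (norm (p - a) + 1) * e"
    using graff_near_approx_direction[OF near A B] by blast
  have "b + z \<in> B" using affine_add_direction[OF B(1) \<open>b \<in> B\<close> z(1)] .
  moreover have "norm (b + z - p) \<le> (norm (p - a) + 2) * e"
  proof -
    have "b + z - p = (b - a) + (z - (p - a))" by simp
    then have "norm (b + z - p) \<le> norm (b - a) + norm (z - (p - a))"
      by (metis norm_triangle_ineq)
    also have "\<dots> \<le> (norm (p - a) + 2) * e" using ab z(2) by (simp add: algebra_simps)
    finally show ?thesis .
  qed
  ultimately show ?thesis using that unfolding a_def by blast
qed

lemma exists_selection_LIMSEQ:
  fixes p :: "'a::real_normed_vector"
  assumes "\<And>n. \<exists>q\<in>S n. norm (q - p) \<le> C * inverse (real (Suc n))"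
  shows "\<exists>P. (\<forall>n. P n \<in> S n) \<and> P \<longlonglongrightarrow> p"
proof -
  obtain P where P: "\<And>n. P n \<in> S n" "\<And>n. norm (P n - p) \<le> C * inverse (real (Suc n))"
    using assms by metis
  have "\<forall>\<^sub>F n in sequentially. norm (P n - p) \<le> C * inverse (real (Suc n))"
    using P(2) by simp
  moreover have "(\<lambda>n. C * inverse (real (Suc n))) \<longlonglongrightarrow> 0"
    using tendsto_mult_right_zero[OF LIMSEQ_inverse_real_of_nat] by simp
  ultimately have "(\<lambda>n. P n - p) \<longlonglongrightarrow> 0"
    by (rule Lim_null_comparison)
  then show ?thesis
    using P(1) LIM_zero_cancel by blast
qed

lemma graff_dense_approx_sequence:
  fixes A :: "'a::euclidean_space set"
  assumes dense: "graff_dense k D" and A: "A \<in> graff k"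
  obtains Bs where "\<And>n. Bs n \<in> D"
    and "\<And>p. p \<in> A \<Longrightarrow> \<exists>P. (\<forall>n. P n \<in> Bs n) \<and> P \<longlonglongrightarrow> p"
    and "\<And>z. z \<in> direction A \<Longrightarrow> \<exists>Z. (\<forall>n. Z n \<in> direction (Bs n)) \<and> Z \<longlonglongrightarrow> z"
proof -
  have "\<forall>n. \<exists>B\<in>D. graff_near A B (inverse (real (Suc n)))"
    using dense A unfolding graff_dense_def by simp
  then obtain Bs where Bs: "\<And>n. Bs n \<in> D" and near: "\<And>n. graff_near A (Bs n) (inverse (real (Suc n)))"
    by metis
  have A': "affine A" "A \<noteq> {}" using graff_affine_nonempty[OF A] .
  have B': "affine (Bs n)" "Bs n \<noteq> {}" for n
    using graff_affine_nonempty Bs dense unfolding graff_dense_def by blast+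
  show ?thesis
  proof (rule that[OF Bs])
    fix p assume "p \<in> A"
    show "\<exists>P. (\<forall>n. P n \<in> Bs n) \<and> P \<longlonglongrightarrow> p"
      using graff_near_approx_point[OF near A' B' \<open>p \<in> A\<close>]
      by (intro exists_selection_LIMSEQ) blast
  next
    fix z assume "z \<in> direction A"
    show "\<exists>Z. (\<forall>n. Z n \<in> direction (Bs n)) \<and> Z \<longlonglongrightarrow> z"
      using graff_near_approx_direction[OF near A' B' \<open>z \<in> direction A\<close>]
      by (intro exists_selection_LIMSEQ) blast
  qed
qed

lemma linear_differences_on_limit:
  fixes F :: "'a::euclidean_space \<Rightarrow> 'a \<Rightarrow> real"
  assumes cont: "continuous_on UNIV (\<lambda>(x, v). F x v)"
    and lin: "\<And>n. linear_differences_on (Bs n) F"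
    and points: "\<And>p. p \<in> A \<Longrightarrow> \<exists>P. (\<forall>n. P n \<in> Bs n) \<and> P \<longlonglongrightarrow> p"
    and dirs: "\<And>z. z \<in> direction A \<Longrightarrow> \<exists>Z. (\<forall>n. Z n \<in> direction (Bs n)) \<and> Z \<longlonglongrightarrow> z"
  shows "linear_differences_on A F"
  unfolding linear_differences_on_def
proof (intro ballI allI)
  have F_lim: "(\<lambda>n. F (P n) (W n)) \<longlonglongrightarrow> F p w" if "P \<longlonglongrightarrow> p" "W \<longlonglongrightarrow> w" for P W p w
  proof -
    have "isCont (\<lambda>(x, v). F x v) (p, w)"
      using cont by (simp add: continuous_on_eq_continuous_at)
    from isCont_tendsto_compose[OF this tendsto_Pair[OF that]] show ?thesis by simp
  qed
  fix x y u v a b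
  assume "x \<in> A" "y \<in> A" "u \<in> direction A" "v \<in> direction A"
  then obtain X Y U V where XY: "\<And>n. X n \<in> Bs n" "\<And>n. Y n \<in> Bs n" "X \<longlonglongrightarrow> x" "Y \<longlonglongrightarrow> y"
    and UV: "\<And>n. U n \<in> direction (Bs n)" "\<And>n. V n \<in> direction (Bs n)" "U \<longlonglongrightarrow> u" "V \<longlonglongrightarrow> v"
    using points dirs by metis
  let ?W = "\<lambda>n. a *\<^sub>R U n + b *\<^sub>R V n"
  have "F (Y n) (?W n) - F (X n) (?W n) = a * (F (Y n) (U n) - F (X n) (U n)) + b * (F (Y n) (V n) - F (X n) (V n))"
    for n using lin[of n] XY UV unfolding linear_differences_on_def by blast
  moreover have "(\<lambda>n. F (Y n) (?W n) - F (X n) (?W n))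
      \<longlonglongrightarrow> F y (a *\<^sub>R u + b *\<^sub>R v) - F x (a *\<^sub>R u + b *\<^sub>R v)"
    using XY UV by (intro tendsto_intros F_lim)
  moreover have "(\<lambda>n. a * (F (Y n) (U n) - F (X n) (U n)) + b * (F (Y n) (V n) - F (X n) (V n)))
      \<longlonglongrightarrow> a * (F y u - F x u) + b * (F y v - F x v)"
    using XY UV by (intro tendsto_intros F_lim)
  ultimately show "F y (a *\<^sub>R u + b *\<^sub>R v) - F x (a *\<^sub>R u + b *\<^sub>R v) = a * (F y u - F x u) + b * (F y v - F x v)"
    using LIMSEQ_unique by simp
qed

lemma graff_dense_imp_linear_differences_on:
  fixes F :: "'a::euclidean_space \<Rightarrow> 'a \<Rightarrow> real"
  assumes cont: "continuous_on UNIV (\<lambda>(x, v). F x v)"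
    and dense: "graff_dense k {A \<in> graff k. minkowski_randers A F}" and A: "A \<in> graff k"
  shows "linear_differences_on A F"
proof -
  obtain Bs where Bs: "\<And>n. Bs n \<in> {A \<in> graff k. minkowski_randers A F}"
    and "\<And>p. p \<in> A \<Longrightarrow> \<exists>P. (\<forall>n. P n \<in> Bs n) \<and> P \<longlonglongrightarrow> p"
    and "\<And>z. z \<in> direction A \<Longrightarrow> \<exists>Z. (\<forall>n. Z n \<in> direction (Bs n)) \<and> Z \<longlonglongrightarrow> z"
    using graff_dense_approx_sequence[OF dense A] by blast
  moreover have "linear_differences_on (Bs n) F" for n
    using Bs[of n] graff_affine_nonempty minkowski_randers_imp_linear_differences_on by blast
  ultimately show ?thesis
    using linear_differences_on_limit[OF cont] by blast
qed

lemma graff_dense_graff: "graff_dense k (graff k)"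
  unfolding graff_dense_def graff_near_def by (auto intro!: bexI)

section \<open>Differentiation along lines\<close>

lemma linear_if_linear_on_planes_through:
  fixes B :: "'a::real_vector \<Rightarrow> 'a \<Rightarrow> real"
  assumes add: "\<And>d1 d2 w. B (d1 + d2) w = B d1 w + B d2 w"
    and plane: "\<And>d u a b. B d (a *\<^sub>R d + b *\<^sub>R u) = a * B d d + b * B d u"
  shows "linear (B d)"
proof -
  define D where "D d x y = B d (x + y) - B d x - B d y" for d x y
  have D_diff: "D (d1 - d2) x y = D d1 x y - D d2 x y" for d1 d2 x y
    using add[of "d1 - d2" d2] unfolding D_def by simp
  have D_sym: "D d x y = D d y x" for d x y
    unfolding D_def by (simp add: add.commute)
  have D_self: "D d d y = 0" for d y
    using plane[of d 1 1 y] unfolding D_def by simp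
  have D_shift: "D d (x + d) y = D d x y" for d x y
    using plane[of d 1 1 "x + y"] plane[of d 1 1 x] unfolding D_def by (simp add: algebra_simps)
  have D_antisym: "D x z y = - D z x y" for x z y
  proof -
    have "D (z - x) z y = D (z - x) x y"
      using D_shift[of "z - x" x y] by simp
    then show ?thesis using D_self unfolding D_diff by simp
  qed
  \<comment> \<open>Antisymmetric in the first two and symmetric in the last two arguments forces \<open>D = 0\<close>.\<close>
  have D_zero: "D d x y = 0" for x y
    using D_antisym[of d x y] D_sym[of x d y] D_antisym[of x y d] D_sym[of y x d]
      D_antisym[of y d x] D_sym[of d y x]
    by simp
  have "B d (x + y) = B d x + B d y" for x y
    using D_zero[of x y] unfolding D_def by linarith
  moreover have "B d (c *\<^sub>R x) = c * B d x" for c x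
    using plane[of d 0 c x] by simp
  ultimately show ?thesis
    by (intro linearI) simp_all
qed

lemma finsler_on_UNIV_partial_derivative:
  fixes F :: "'a::euclidean_space \<Rightarrow> 'a \<Rightarrow> real"
  assumes fin: "finsler_on UNIV F"
  obtains D where "\<And>x d w t. ((\<lambda>s. F (x + s *\<^sub>R d) w) has_real_derivative D (x + t *\<^sub>R d) d w) (at t)"
    and "\<And>x d1 d2 w. D x (d1 + d2) w = D x d1 w + D x d2 w"
proof -
  let ?S = "(UNIV::'a set) \<times> (UNIV - {0})"
  obtain f' f'' where "C2_with ?S (\<lambda>(x, v). F x v) f' f''"
    using fin unfolding finsler_on_def C2_on_def by auto
  then have f': "((\<lambda>(x, v). F x v) has_derivative blinfun_apply (f' p)) (at p)" if "p \<in> ?S" for p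
    using that unfolding C2_with_def
    by (metis at_within_open open_Times open_UNIV open_delete)
  have F0: "F x 0 = 0" for x
    using fin unfolding finsler_on_def minkowski_norm_def by auto
  \<comment> \<open>\<open>f'\<close> is only available off the zero section, where \<open>F x 0 = 0\<close> anyway.\<close>
  define D where "D x d w = (if w = 0 then 0 else f' (x, w) (d, 0))" for x d w
  show ?thesis
  proof (rule that)
    fix x d w :: 'a and t :: real
    show "((\<lambda>s. F (x + s *\<^sub>R d) w) has_real_derivative D (x + t *\<^sub>R d) d w) (at t)"
    proof (cases "w = 0")
      case True
      then show ?thesis unfolding D_def by (simp add: F0)
    next
      case False
      have "((\<lambda>s. (x + s *\<^sub>R d, w)) has_derivative (\<lambda>h. h *\<^sub>R (d, 0))) (at t)"
        by (auto intro!: derivative_eq_intros)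
      from diff_chain_at[OF this f'] False
      have "((\<lambda>s. F (x + s *\<^sub>R d) w) has_derivative (\<lambda>h. f' (x + t *\<^sub>R d, w) (h *\<^sub>R (d, 0)))) (at t)"
        by (simp only: comp_def case_prod_conv) simp
      moreover have "(\<lambda>h. f' (x + t *\<^sub>R d, w) (h *\<^sub>R (d, 0))) = (*) (D (x + t *\<^sub>R d) d w)"
        using False unfolding D_def
        by (simp add: fun_eq_iff blinfun.scaleR_right mult.commute del: scaleR_Pair)
      ultimately show ?thesis
        unfolding has_field_derivative_def by simp
    qed
  next
    fix x d1 d2 w :: 'a
    have "f' (x, w) (d1 + d2, 0) = f' (x, w) ((d1, 0) + (d2, 0))" by simp
    then show "D x (d1 + d2) w = D x d1 w + D x d2 w"
      unfolding D_def blinfun.add_right by simp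
  qed
qed

lemma linear_partial_derivative_if_planes:
  fixes F :: "'a::euclidean_space \<Rightarrow> 'a \<Rightarrow> real"
  assumes deriv: "\<And>x d w t. ((\<lambda>s. F (x + s *\<^sub>R d) w) has_real_derivative D (x + t *\<^sub>R d) d w) (at t)"
    and add: "\<And>x d1 d2 w. D x (d1 + d2) w = D x d1 w + D x d2 w"
    and planes: "\<And>x d u. linear_differences_on ((+) x ` span {d, u}) F"
  shows "linear (D x d)"
proof (rule linear_if_linear_on_planes_through[OF add])
  fix d u :: 'a and a b :: real
  have quotient: "((\<lambda>h. (F (x + h *\<^sub>R d) w - F x w) / h) \<longlongrightarrow> D x d w) (at 0)" for w
    using deriv[of x d w 0] unfolding DERIV_def by simp
  have "x \<in> (+) x ` span {d, u}" "x + h *\<^sub>R d \<in> (+) x ` span {d, u}" for h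
    by (auto simp: span_base span_scale span_zero image_iff intro: bexI[of _ 0])
  moreover have "d \<in> direction ((+) x ` span {d, u})" "u \<in> direction ((+) x ` span {d, u})"
    by (simp_all add: direction_translation_subspace span_base)
  ultimately have "F (x + h *\<^sub>R d) (a *\<^sub>R d + b *\<^sub>R u) - F x (a *\<^sub>R d + b *\<^sub>R u)
      = a * (F (x + h *\<^sub>R d) d - F x d) + b * (F (x + h *\<^sub>R d) u - F x u)" for h
    using planes[of x d u] unfolding linear_differences_on_def by blast
  then have "(\<lambda>h. (F (x + h *\<^sub>R d) (a *\<^sub>R d + b *\<^sub>R u) - F x (a *\<^sub>R d + b *\<^sub>R u)) / h)
      = (\<lambda>h. a * ((F (x + h *\<^sub>R d) d - F x d) / h) + b * ((F (x + h *\<^sub>R d) u - F x u) / h))"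
    by (simp add: add_divide_distrib)
  with quotient[of "a *\<^sub>R d + b *\<^sub>R u"]
  have "((\<lambda>h. a * ((F (x + h *\<^sub>R d) d - F x d) / h) + b * ((F (x + h *\<^sub>R d) u - F x u) / h))
      \<longlongrightarrow> D x d (a *\<^sub>R d + b *\<^sub>R u)) (at 0)"
    by simp
  moreover have "((\<lambda>h. a * ((F (x + h *\<^sub>R d) d - F x d) / h) + b * ((F (x + h *\<^sub>R d) u - F x u) / h))
      \<longlongrightarrow> a * D x d d + b * D x d u) (at 0)"
    by (intro tendsto_intros quotient)
  ultimately show "D x d (a *\<^sub>R d + b *\<^sub>R u) = a * D x d d + b * D x d u"
    by (rule tendsto_unique[OF trivial_limit_at])
qed

lemma linear_differences_on_UNIV_if_planes:
  fixes F :: "'a::euclidean_space \<Rightarrow> 'a \<Rightarrow> real"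
  assumes fin: "finsler_on UNIV F"
    and planes: "\<And>x d u. linear_differences_on ((+) x ` span {d, u}) F"
  shows "linear_differences_on UNIV F"
  unfolding linear_differences_on_def
proof (intro ballI allI)
  obtain D where deriv: "\<And>x d w t. ((\<lambda>s. F (x + s *\<^sub>R d) w) has_real_derivative D (x + t *\<^sub>R d) d w) (at t)"
    and add: "\<And>x d1 d2 w. D x (d1 + d2) w = D x d1 w + D x d2 w"
    using finsler_on_UNIV_partial_derivative[OF fin] by blast
  have lin: "linear (D p d)" for p d
    using linear_partial_derivative_if_planes[OF deriv add planes] .
  fix x y u v :: 'a and a b :: real
  define G where "G p = F p (a *\<^sub>R u + b *\<^sub>R v) - a * F p u - b * F p v" for p
  have "((\<lambda>s. G (x + s *\<^sub>R (y - x))) has_real_derivative 0) (at s)" for s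
  proof -
    let ?p = "x + s *\<^sub>R (y - x)"
    have "((\<lambda>s. G (x + s *\<^sub>R (y - x))) has_real_derivative
        D ?p (y - x) (a *\<^sub>R u + b *\<^sub>R v) - a * D ?p (y - x) u - b * D ?p (y - x) v) (at s)"
      unfolding G_def by (intro derivative_intros DERIV_cmult deriv)
    then show ?thesis
      using linear_add[OF lin] linear_scale[OF lin] by simp
  qed
  then have "G (x + 1 *\<^sub>R (y - x)) = G (x + 0 *\<^sub>R (y - x))"
    using DERIV_isconst_all[of "\<lambda>s. G (x + s *\<^sub>R (y - x))"] by blast
  then show "F y (a *\<^sub>R u + b *\<^sub>R v) - F x (a *\<^sub>R u + b *\<^sub>R v) = a * (F y u - F x u) + b * (F y v - F x v)"
    unfolding G_def by (simp add: algebra_simps)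
qed

section \<open>The translation-invariant part\<close>

lemma C2_with_compose_blinfun:
  fixes J :: "'c::real_normed_vector \<Rightarrow>\<^sub>L 'b::real_normed_vector"
    and f :: "'b \<Rightarrow> real"
  assumes f: "C2_with S f f' f''" and JT: "blinfun_apply J ` T \<subseteq> S"
    and CR: "\<And>K. blinfun_apply CR K = K o\<^sub>L J"
  shows "C2_with T (\<lambda>p. f (J p)) (\<lambda>p. f' (J p) o\<^sub>L J) (\<lambda>p. CR o\<^sub>L f'' (J p) o\<^sub>L J)"
  unfolding C2_with_def
proof (intro conjI ballI)
  have dJ: "(blinfun_apply J has_derivative blinfun_apply J) (at p within T)" for p
    by (rule bounded_linear_imp_has_derivative[OF blinfun.bounded_linear_right])
  fix p assume p: "p \<in> T"
  then have Jp: "J p \<in> S" using JT by blast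
  have "(f has_derivative blinfun_apply (f' (J p))) (at (J p) within blinfun_apply J ` T)"
    using f Jp JT unfolding C2_with_def by (meson has_derivative_subset)
  from diff_chain_within[OF dJ this]
  show "((\<lambda>p. f (J p)) has_derivative blinfun_apply (f' (J p) o\<^sub>L J)) (at p within T)"
    by (simp add: comp_def blinfun_compose.rep_eq)
  have "(f' has_derivative blinfun_apply (f'' (J p))) (at (J p) within blinfun_apply J ` T)"
    using f Jp JT unfolding C2_with_def by (meson has_derivative_subset)
  from diff_chain_within[OF dJ this]
  have "((\<lambda>p. f' (J p)) has_derivative (\<lambda>h. f'' (J p) (J h))) (at p within T)"
    by (simp add: comp_def)
  then have "((\<lambda>p. CR (f' (J p))) has_derivative (\<lambda>h. CR (f'' (J p) (J h)))) (at p within T)"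
    by (rule bounded_linear.has_derivative[OF blinfun.bounded_linear_right])
  moreover have "(\<lambda>p. CR (f' (J p))) = (\<lambda>p. f' (J p) o\<^sub>L J)"
    by (simp add: CR)
  moreover have "(\<lambda>h. CR (f'' (J p) (J h))) = blinfun_apply (CR o\<^sub>L f'' (J p) o\<^sub>L J)"
    by (rule ext) simp
  ultimately show "((\<lambda>p. f' (J p) o\<^sub>L J) has_derivative blinfun_apply (CR o\<^sub>L f'' (J p) o\<^sub>L J)) (at p within T)"
    by metis
next
  have "continuous_on S f''" using f unfolding C2_with_def by blast
  from continuous_on_compose2[OF this linear_continuous_on[OF blinfun.bounded_linear_right] JT]
  have "continuous_on T (\<lambda>p. f'' (J p))" .
  moreover have "bounded_linear (\<lambda>K. CR o\<^sub>L K o\<^sub>L J)"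
    by (intro bounded_linear_compose[OF
          bounded_bilinear.bounded_linear_left[OF bounded_bilinear_blinfun_compose]
          bounded_bilinear.bounded_linear_right[OF bounded_bilinear_blinfun_compose]])
  ultimately show "continuous_on T (\<lambda>p. CR o\<^sub>L f'' (J p) o\<^sub>L J)"
    using bounded_linear.continuous_on by blast
qed

lemma C2_on_compose_blinfun:
  fixes J :: "'c::real_normed_vector \<Rightarrow>\<^sub>L 'b::real_normed_vector"
    and f :: "'b \<Rightarrow> real"
  assumes "C2_on S f" "blinfun_apply J ` T \<subseteq> S"
  shows "C2_on T (\<lambda>p. f (J p))"
proof -
  obtain f' f'' where f: "C2_with S f f' f''" using assms(1) unfolding C2_on_def by blast
  define CR :: "('b \<Rightarrow>\<^sub>L real) \<Rightarrow>\<^sub>L ('c \<Rightarrow>\<^sub>L real)" where "CR = Blinfun (\<lambda>K. K o\<^sub>L J)"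
  have "blinfun_apply CR K = K o\<^sub>L J" for K
    unfolding CR_def
    by (simp add: bounded_linear_Blinfun_apply
        bounded_bilinear.bounded_linear_left[OF bounded_bilinear_blinfun_compose])
  from C2_with_compose_blinfun[OF f assms(2) this] show ?thesis
    unfolding C2_on_def by blast
qed

lemma finsler_on_UNIV_const_0:
  fixes F :: "'a::euclidean_space \<Rightarrow> 'a \<Rightarrow> real"
  assumes "finsler_on UNIV F"
  shows "finsler_on UNIV (\<lambda>_ v. F 0 v)"
proof -
  define J :: "('a \<times> 'a) \<Rightarrow>\<^sub>L ('a \<times> 'a)" where "J = Blinfun (\<lambda>p. (0, snd p))"
  have J: "blinfun_apply J p = (0, snd p)" for p
    unfolding J_def
    by (simp add: bounded_linear_Blinfun_apply bounded_linear_Pair bounded_linear_snd)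
  have "C2_on (UNIV \<times> (UNIV - {0})) (\<lambda>(x, v). F x v)"
    using assms unfolding finsler_on_def by simp
  then have "C2_on (UNIV \<times> (UNIV - {0})) (\<lambda>p. (\<lambda>(x, v). F x v) (J p))"
    by (rule C2_on_compose_blinfun) (auto simp: J)
  then have "C2_on (UNIV \<times> (UNIV - {0})) (\<lambda>(x::'a, v). F 0 v)"
    by (simp add: J case_prod_unfold)
  moreover have "continuous_on UNIV (\<lambda>(x::'a, v). F 0 v)"
  proof -
    have "continuous_on UNIV (\<lambda>(x, v). F x v)"
      using assms unfolding finsler_on_def by simp
    then have "continuous_on UNIV (\<lambda>p::'a \<times> 'a. (\<lambda>(x, v). F x v) (0, snd p))"
      by (rule continuous_on_compose2) (simp_all add: continuous_on_Pair continuous_on_snd)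
    then show ?thesis by (simp add: case_prod_beta)
  qed
  moreover have "minkowski_norm UNIV (F 0)"
    using assms unfolding finsler_on_def by simp
  ultimately show ?thesis
    unfolding finsler_on_def by simp
qed

lemma minkowski_randers_UNIV_if_linear_differences_on:
  fixes F :: "'a::euclidean_space \<Rightarrow> 'a \<Rightarrow> real"
  assumes "finsler_on UNIV F" "linear_differences_on UNIV F"
  shows "minkowski_randers UNIV F"
  unfolding minkowski_randers_def
proof (intro conjI exI)
  show "finsler_on UNIV (\<lambda>_ v. F 0 v)"
    using assms(1) by (rule finsler_on_UNIV_const_0)
  show "\<forall>x\<in>UNIV. \<forall>u\<in>direction UNIV. \<forall>v\<in>direction UNIV. \<forall>a b.
      F x (a *\<^sub>R u + b *\<^sub>R v) - F 0 (a *\<^sub>R u + b *\<^sub>R v) = a * (F x u - F 0 u) + b * (F x v - F 0 v)"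
    using assms(2) unfolding linear_differences_on_def by blast
qed (use assms(1) in simp_all)

theorem corollary4p8:
  fixes F :: "'a::euclidean_space \<Rightarrow> 'a \<Rightarrow> real"
  assumes "DIM('a) \<ge> 3"
    and "finsler_on (UNIV :: 'a set) F"
  shows "minkowski_randers (UNIV :: 'a set) F \<longleftrightarrow>
    (\<exists>k::nat. 2 \<le> k \<and> k \<le> DIM('a) - 1 \<and>
       graff_dense k {A \<in> graff k. minkowski_randers A F})"
proof
  assume "minkowski_randers UNIV F"
  then have "{A \<in> graff 2. minkowski_randers A F} = graff 2"
    using minkowski_randers_mono by blast
  then show "\<exists>k::nat. 2 \<le> k \<and> k \<le> DIM('a) - 1 \<and> graff_dense k {A \<in> graff k. minkowski_randers A F}"
    using assms(1) graff_dense_graff by (intro exI[of _ 2]) auto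
next
  assume "\<exists>k::nat. 2 \<le> k \<and> k \<le> DIM('a) - 1 \<and> graff_dense k {A \<in> graff k. minkowski_randers A F}"
  then obtain k where k: "2 \<le> k" "k \<le> DIM('a)"
    and dense: "graff_dense k {A \<in> graff k. minkowski_randers A F}"
    by auto
  have "continuous_on UNIV (\<lambda>(x, v). F x v)"
    using assms(2) unfolding finsler_on_def by simp
  then have "\<forall>A\<in>graff k. linear_differences_on A F"
    using graff_dense_imp_linear_differences_on dense by blast
  then have "linear_differences_on ((+) x ` span {d, u}) F" for x d u
    using linear_differences_on_planes k by blast
  then have "linear_differences_on UNIV F"
    using linear_differences_on_UNIV_if_planes[OF assms(2)] by blast
  then show "minkowski_randers UNIV F"
    using minkowski_randers_UNIV_if_linear_differences_on[OF assms(2)] by blast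
qed

end
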